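(* Let $N$ be a positive integer and let $\mathbf a=[a_1,a_2,a_3,a_4]$ be a vector of integers with $a_i\not\equiv 0\pmod N$ for all $i$, $a_1\not\equiv\pm a_2\pmod N$ and $a_3\not\equiv\pm a_4\pmod N$. Let \[W_{\mathbf a}(\tau)=\frac{\wp(a_1/N;L_\tau)-\wp(a_2/N;L_\tau)}{\wp(a_3/N;L_\tau)-\wp(a_4/N;L_\tau)},\] a modular function for $\Gamma_1(N)$. Let $Q=[u,t]$ be a cusp of $\Gamma_1(N)$, where either $1\le t<N/2$, $D=\gcd(t,N)$, $1\le u\le D$, $\gcd(u,D)=1$, or $t\in\{N/2,N\}$, $D=\gcd(t,N)$, $1\le u\le D/2$, $\gcd(u,D)=1$. Put $t'=t/D$. Then the order of $W_{\mathbf a}$ at $Q$, with respect to the local parameter $q_D=\exp(2\pi i\tau D/N)$, equals \[\min(\{a_1t'\}_D,\{a_2t'\}_D)-\min(\{a_3t'\}_D,\{a_4t'\}_D).\] In particular it is independent of $u$.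
   Context: $L_\tau$ is the lattice $\mathbf Z+\mathbf Z\tau$ for $\tau$ in the upper half plane, and $\wp(z;L_\tau)$ is the Weierstrass $\wp$-function of $L_\tau$. $\Gamma_1(N)=\{\begin{pmatrix}a&b\\c&d\end{pmatrix}\in SL_2(\mathbf Z): a\equiv1,\ c\equiv0 \pmod N\}$. The cusp $[u,t]$ of $\Gamma_1(N)$ denotes the $\Gamma_1(N)$-equivalence class of cusps $a/c$ ($\gcd(a,c)=1$) with $c\equiv t\pmod N$ and $a\equiv u\pmod{D}$, $D=\gcd(t,N)$; the listed pairs $[u,t]$ form a complete set of inequivalent cusps, and $q_D=\exp(2\pi i\tau D/N)$ is a local parameter there (i.e. one expands $W_{\mathbf a}(B\tau)$ in powers of $q_D$, where $B\in SL_2(\mathbf Z)$ maps $\infty$ to the cusp). For a divisor $D$ of $N$ and an integer $n$, the integer $\{n\}_D$ is uniquely determined by: $0\le\{n\}_D\le \frac N{2D}$ and $n\equiv\mu\{n\}_D\pmod{N/D}$ for some $\mu\in\{\pm1\}$ (with $\mu=1$ if $\{n\}_D\in\{0,\frac N{2D}\}$). *)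

theory Defs
  imports "HOL-Complex_Analysis.Complex_Analysis" "HOL-Number_Theory.Cong"
begin

text \<open>The series converges absolutely (tau not real), so the unconditional sum is used.\<close>
definition wp :: "complex \<Rightarrow> complex \<Rightarrow> complex" where
  "wp z \<tau> = 1 / z\<^sup>2 +
     (\<Sum>\<^sub>\<infinity>(m, n) \<in> (UNIV :: (int \<times> int) set) - {(0, 0)}.
        1 / (z - (of_int m + of_int n * \<tau>))\<^sup>2 - 1 / (of_int m + of_int n * \<tau>)\<^sup>2)"

definition W :: "int \<Rightarrow> int \<Rightarrow> int \<Rightarrow> int \<Rightarrow> int \<Rightarrow> complex \<Rightarrow> complex" where
  "W N a1 a2 a3 a4 \<tau> =
     (wp (of_int a1 / of_int N) \<tau> - wp (of_int a2 / of_int N) \<tau>) /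
     (wp (of_int a3 / of_int N) \<tau> - wp (of_int a4 / of_int N) \<tau>)"

definition moebius :: "int \<Rightarrow> int \<Rightarrow> int \<Rightarrow> int \<Rightarrow> complex \<Rightarrow> complex" where
  "moebius p q r s \<tau> = (of_int p * \<tau> + of_int q) / (of_int r * \<tau> + of_int s)"

text \<open>f has order m at infinity with respect to the local parameter
  q = exp(2 pi i tau / h): for Im tau large, f(tau) = q^m g(q) with g holomorphic
  near 0 and g(0) nonzero, i.e. the q-expansion of f starts with a nonzero
  coefficient at q^m.\<close>
definition has_q_order :: "(complex \<Rightarrow> complex) \<Rightarrow> real \<Rightarrow> int \<Rightarrow> bool" where
  "has_q_order f h m \<longleftrightarrow>
     (\<exists>r>0. \<exists>g. g holomorphic_on ball 0 r \<and> g 0 \<noteq> 0 \<and>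
        (\<exists>y0. \<forall>\<tau>. Im \<tau> > y0 \<longrightarrow>
            (let q = exp (2 * of_real pi * \<i> * \<tau> / of_real h)
             in q \<in> ball 0 r \<and> f \<tau> = q powi m * g q)))"

definition brace :: "int \<Rightarrow> int \<Rightarrow> int \<Rightarrow> int" where
  "brace N D n = (THE x. 0 \<le> x \<and> 2 * x \<le> N div D \<and>
     (\<exists>\<mu> \<in> {1, -1}. [n = \<mu> * x] (mod (N div D)) \<and>
        ((x = 0 \<or> 2 * x = N div D) \<longrightarrow> \<mu> = 1)))"

end

theory Submission
  imports Defs
begin

text \<open>
  Sum the lattice series of wp row by row. By the reflection formula for the trigamma
  function, row n contributes (2 pi i)^2 F(e(z - n tau)), where F(x) = x / (1 - x)^2 is row_kernel and
  e(w) = exp(2 pi i w). After the substitution wp(a/N; gamma tau) = j^2 wp(a j/N; tau),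
  j = r tau + s, the argument of row n becomes zeta q^(a r' - n M), where r = D r', M = N/D,
  q = e(tau/M) and zeta = e(a s/N). Summing over n, wp(a1/N) - wp(a2/N) becomes
  (2 pi i)^2 q^m G(q) with G holomorphic at 0 and m = min(b1, b2), where b_i, the distance
  from a_i r' to the nearest multiple of M, equals {a_i t'}_D. Since gcd(r', M) = gcd(s, D) = 1,
  the conditions on a1 and a2 make G(0) nonzero. The order of W is therefore the difference
  of two such exponents.
\<close>

section \<open>The lattice series\<close>

abbreviation lattice_point :: "complex \<Rightarrow> int \<Rightarrow> int \<Rightarrow> complex" where
  "lattice_point \<tau> m n \<equiv> of_int m + of_int n * \<tau>"

lemma has_sum_diff:
  fixes f g :: "'a \<Rightarrow> 'b::topological_ab_group_add"
  assumes "(f has_sum a) A" "(g has_sum b) A"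
  shows "((\<lambda>x. f x - g x) has_sum (a - b)) A"
proof -
  have "((\<lambda>x. - g x) has_sum - b) A" using assms(2) by (simp add: has_sum_uminus)
  from has_sum_add[OF assms(1) this] show ?thesis by simp
qed

lemma has_sum_int_from_nat:
  fixes f :: "int \<Rightarrow> 'a::topological_comm_monoid_add"
  assumes "((\<lambda>k. f (int k)) has_sum A) UNIV" and "((\<lambda>k. f (- int k - 1)) has_sum B) UNIV"
  shows "(f has_sum (A + B)) UNIV"
proof -
  have "(f has_sum A) (range int)"
    using assms(1) by (subst has_sum_reindex) (auto simp: o_def)
  moreover have "(f has_sum B) (range (\<lambda>k. - int k - 1))"
    using assms(2) by (subst has_sum_reindex) (auto simp: o_def inj_on_def)
  ultimately have "(f has_sum (A + B)) (range int \<union> range (\<lambda>k. - int k - 1))"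
    by (rule has_sum_Un_disjoint) auto
  moreover have "range int \<union> range (\<lambda>k. - int k - 1) = UNIV"
  proof -
    have "x \<in> range (\<lambda>k. - int k - 1)" if "x < 0" for x :: int
      using that by (intro image_eqI[of _ _ "nat (- x - 1)"]) auto
    moreover have "x \<in> range int" if "x \<ge> 0" for x :: int
      using that by (intro image_eqI[of _ _ "nat x"]) auto
    ultimately show ?thesis by (metis UNIV_eq_I UnCI linorder_not_le)
  qed
  ultimately show ?thesis by simp
qed

lemma lattice_norm_lower_bound:
  fixes \<tau> :: complex
  assumes "Im \<tau> > 0"
  obtains \<kappa> :: real where "\<kappa> > 0"
    "\<And>m n. \<kappa> * (\<bar>real_of_int m\<bar> + \<bar>real_of_int n\<bar>) \<le> norm (lattice_point \<tau> m n)"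
proof
  define y T where "y = Im \<tau>" and "T = norm \<tau>"
  have y: "y > 0" and T: "T \<ge> 0" using assms by (simp_all add: y_def T_def)
  show "y / (y + 1 + T) > 0" using y T by simp
  fix m n :: int
  define A where "A = norm (lattice_point \<tau> m n)"
  have "\<bar>real_of_int n\<bar> * y \<le> A"
    using abs_Im_le_cmod[of "lattice_point \<tau> m n"] y by (simp add: A_def y_def abs_mult)
  hence "(1 + T) * \<bar>real_of_int n\<bar> \<le> (1 + T) * (A / y)"
    using y T by (intro mult_left_mono) (simp_all add: field_simps)
  moreover have "\<bar>real_of_int m\<bar> - \<bar>real_of_int n\<bar> * T \<le> A"
    using norm_diff_ineq[of "of_int m :: complex" "of_int n * \<tau>"] by (simp add: A_def T_def norm_mult mult.commute)
  ultimately have "\<bar>real_of_int m\<bar> + \<bar>real_of_int n\<bar> \<le> A + (1 + T) * (A / y)"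
    by (simp add: algebra_simps)
  also have "\<dots> = A * (y + 1 + T) / y"
    using y by (simp add: field_simps)
  finally show "y / (y + 1 + T) * (\<bar>real_of_int m\<bar> + \<bar>real_of_int n\<bar>) \<le> A"
    using y T by (simp add: field_simps)
qed

definition decay_weight :: "int \<Rightarrow> real" where
  "decay_weight m = (1 + \<bar>real_of_int m\<bar>) powr (-3/2)"

lemma decay_weight_nonneg: "decay_weight m \<ge> 0"
  by (simp add: decay_weight_def)

lemma decay_weight_summable: "decay_weight summable_on UNIV"
proof -
  have pos: "summable (\<lambda>k. real (Suc k) powr (-3/2))"
    using summable_real_powr_iff[of "-3/2"] summable_Suc_iff[of "\<lambda>k. real k powr (-3/2)"] by simp
  hence neg: "summable (\<lambda>k. real (Suc (Suc k)) powr (-3/2))"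
    using summable_Suc_iff[of "\<lambda>k. real (Suc k) powr (-3/2)"] by simp
  have "((\<lambda>k. decay_weight (int k)) has_sum (\<Sum>k. real (Suc k) powr (-3/2))) UNIV"
    using sums_nonneg_imp_has_sum[OF summable_sums[OF pos]] by (simp add: decay_weight_def add.commute)
  moreover have "((\<lambda>k. decay_weight (- int k - 1)) has_sum (\<Sum>k. real (Suc (Suc k)) powr (-3/2))) UNIV"
    using sums_nonneg_imp_has_sum[OF summable_sums[OF neg]] by (simp add: decay_weight_def add.commute)
  ultimately show ?thesis
    unfolding summable_on_def by (blast intro: has_sum_int_from_nat)
qed

lemma decay_weight_product_summable:
  "(\<lambda>(m, n). decay_weight m * decay_weight n) summable_on (UNIV :: (int \<times> int) set)"
proof -
  define S where "S = infsum decay_weight UNIV"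
  have S: "(decay_weight has_sum S) UNIV"
    using decay_weight_summable unfolding S_def by (rule has_sum_infsum)
  have "(\<lambda>x. case x of (m, n) \<Rightarrow> decay_weight m * decay_weight n) summable_on Sigma UNIV (\<lambda>_. UNIV)"
  proof (rule summable_on_SigmaI[where g = "\<lambda>m. decay_weight m * S"])
    show "((\<lambda>n. case (m, n) of (m, n) \<Rightarrow> decay_weight m * decay_weight n) has_sum decay_weight m * S) UNIV"
      for m using has_sum_cmult_right[OF S, of "decay_weight m"] by simp
    show "(\<lambda>m. decay_weight m * S) summable_on UNIV"
      by (metis has_sum_cmult_left summable_on_def S)
    show "0 \<le> (case x of (m, n) \<Rightarrow> decay_weight m * decay_weight n)" for x
      by (cases x) (simp add: decay_weight_nonneg)
  qed
  thus ?thesis by simp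
qed

lemma inverse_cube_le_decay_weight:
  assumes "(m, n) \<noteq> (0, 0)"
  shows "1 / (\<bar>real_of_int m\<bar> + \<bar>real_of_int n\<bar>) ^ 3 \<le> 27/8 * (decay_weight m * decay_weight n)"
proof -
  define a b s where "a = 1 + \<bar>real_of_int m\<bar>" and "b = 1 + \<bar>real_of_int n\<bar>"
    and "s = \<bar>real_of_int m\<bar> + \<bar>real_of_int n\<bar>"
  have s: "s \<ge> 1" using assms unfolding s_def by auto
  have a: "a \<ge> 1" and b: "b \<ge> 1" by (auto simp: a_def b_def)
  have "a * b \<le> ((a + b) / 2)\<^sup>2"
    using zero_le_power2[of "(a - b) / 2"] by (simp add: power2_eq_square field_simps)
  also have "\<dots> \<le> (3 * s / 2)\<^sup>2"
    using s a b by (intro power_mono) (auto simp: a_def b_def s_def)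
  finally have "(a * b) powr (3/2) \<le> ((3 * s / 2)\<^sup>2) powr (3/2)"
    using a b by (intro powr_mono2) auto
  also have "((3 * s / 2)\<^sup>2) powr (3/2) = ((3 * s / 2) powr 2) powr (3/2)"
    using s by (simp add: powr_realpow)
  also have "\<dots> = (3 * s / 2) powr 3"
    by (simp add: powr_powr)
  also have "\<dots> = (3 * s / 2) ^ 3"
    using s by (simp add: powr_realpow)
  also have "\<dots> = 27/8 * s ^ 3"
    by (simp add: power3_eq_cube)
  finally have P: "(a * b) powr (3/2) \<le> 27/8 * s ^ 3" .
  have "(a * b) powr (3/2) > 0" using a b by simp
  hence "1 / s ^ 3 \<le> 27/8 * (1 / (a * b) powr (3/2))"
    using P s by (simp add: field_simps)
  moreover have "decay_weight m * decay_weight n = 1 / (a * b) powr (3/2)"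
    unfolding decay_weight_def a_def b_def by (simp add: powr_mult powr_minus_divide)
  ultimately show ?thesis unfolding s_def by simp
qed

lemma wp_summand_bound:
  fixes z w :: complex
  assumes "w \<noteq> 0" "2 * norm z \<le> norm w"
  shows "norm (1 / (z - w)\<^sup>2 - 1 / w\<^sup>2) \<le> 10 * norm z / norm w ^ 3"
proof -
  have w: "norm w > 0" using assms by simp
  have zw: "norm (z - w) \<ge> norm w / 2"
    using norm_triangle_ineq2[of w z] assms by (simp add: norm_minus_commute)
  hence "z - w \<noteq> 0" using w by auto
  moreover have "1 * w\<^sup>2 - 1 * (z - w)\<^sup>2 = z * (2 * w - z)"
    by (simp add: power2_eq_square algebra_simps)
  ultimately have eq: "1 / (z - w)\<^sup>2 - 1 / w\<^sup>2 = z * (2 * w - z) / ((z - w)\<^sup>2 * w\<^sup>2)"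
    using diff_frac_eq[of "(z - w)\<^sup>2" "w\<^sup>2" 1 1] assms(1) by simp
  have "norm (2 * w - z) \<le> 5/2 * norm w"
    using norm_triangle_ineq4[of "2 * w" z] assms by simp
  have "norm (z * (2 * w - z) / ((z - w)\<^sup>2 * w\<^sup>2))
      = norm z * norm (2 * w - z) / (norm (z - w) ^ 2 * norm w ^ 2)"
    by (simp add: norm_mult norm_divide norm_power)
  also have "\<dots> \<le> norm z * (5/2 * norm w) / ((norm w / 2) ^ 2 * norm w ^ 2)"
    using \<open>norm (2 * w - z) \<le> 5/2 * norm w\<close> zw w
    by (intro frac_le mult_left_mono mult_mono power_mono) auto
  also have "\<dots> = 10 * norm z / norm w ^ 3"
    using w by (simp add: field_simps power2_eq_square power3_eq_cube)
  finally show ?thesis unfolding eq .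
qed

lemma wp_summand_le_decay_weight:
  fixes z w :: complex and \<kappa> :: real and m n :: int
  assumes \<kappa>: "\<kappa> > 0" and mn: "(m, n) \<noteq> (0, 0)"
    and lb: "\<kappa> * (\<bar>real_of_int m\<bar> + \<bar>real_of_int n\<bar>) \<le> norm w" and big: "2 * norm z \<le> norm w"
  shows "norm (1 / (z - w)\<^sup>2 - 1 / w\<^sup>2) \<le> 10 * norm z / \<kappa> ^ 3 * (27/8 * (decay_weight m * decay_weight n))"
proof -
  have pos: "\<kappa> * (\<bar>real_of_int m\<bar> + \<bar>real_of_int n\<bar>) > 0" using \<kappa> mn by auto
  hence "w \<noteq> 0" using lb by auto
  hence "norm (1 / (z - w)\<^sup>2 - 1 / w\<^sup>2) \<le> 10 * norm z / norm w ^ 3"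
    using wp_summand_bound big by simp
  also have "\<dots> \<le> 10 * norm z / (\<kappa> * (\<bar>real_of_int m\<bar> + \<bar>real_of_int n\<bar>)) ^ 3"
    using lb pos by (intro divide_left_mono power_mono mult_pos_pos) auto
  also have "\<dots> = 10 * norm z / \<kappa> ^ 3 * (1 / (\<bar>real_of_int m\<bar> + \<bar>real_of_int n\<bar>) ^ 3)"
    by (simp add: power_mult_distrib)
  also have "\<dots> \<le> 10 * norm z / \<kappa> ^ 3 * (27/8 * (decay_weight m * decay_weight n))"
    using inverse_cube_le_decay_weight[OF mn] \<kappa> by (intro mult_left_mono) auto
  finally show ?thesis .
qed

lemma wp_summable:
  fixes \<tau> z :: complex
  assumes "Im \<tau> > 0"
  shows "(\<lambda>(m, n). 1 / (z - lattice_point \<tau> m n)\<^sup>2 - 1 / (lattice_point \<tau> m n)\<^sup>2) summable_on UNIV"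
proof -
  obtain \<kappa> :: real where \<kappa>: "\<kappa> > 0"
    and lb: "\<And>m n. \<kappa> * (\<bar>real_of_int m\<bar> + \<bar>real_of_int n\<bar>) \<le> norm (lattice_point \<tau> m n)"
    using lattice_norm_lower_bound[OF assms] by blast
  define f where "f = (\<lambda>(m, n). 1 / (z - lattice_point \<tau> m n)\<^sup>2 - 1 / (lattice_point \<tau> m n)\<^sup>2)"
  define A where "A = {(m, n). (m, n) \<noteq> (0, 0) \<and> 2 * norm z \<le> norm (lattice_point \<tau> m n)}"
  define K where "K = \<lceil>2 * norm z / \<kappa>\<rceil>"
  have "UNIV - A \<subseteq> {-K..K} \<times> {-K..K}"
  proof safe
    fix m n :: int assume "(m, n) \<notin> A"
    hence "(m, n) = (0, 0) \<or> \<kappa> * (\<bar>real_of_int m\<bar> + \<bar>real_of_int n\<bar>) < 2 * norm z"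
      using lb[of m n] by (auto simp: A_def)
    hence "\<bar>real_of_int m\<bar> + \<bar>real_of_int n\<bar> \<le> 2 * norm z / \<kappa>"
      using \<kappa> by (auto simp: field_simps)
    hence "\<bar>m\<bar> \<le> K \<and> \<bar>n\<bar> \<le> K" unfolding K_def by linarith
    thus "m \<in> {-K..K}" "n \<in> {-K..K}" by auto
  qed
  hence "finite (UNIV - A)" by (rule finite_subset) auto
  hence "f summable_on (UNIV - A)" by simp
  moreover have "f summable_on A"
  proof -
    define C where "C = 10 * norm z / \<kappa> ^ 3 * (27/8)"
    have bound: "norm (f x) \<le> C * (case x of (m, n) \<Rightarrow> decay_weight m * decay_weight n)" if "x \<in> A" for x
    proof -
      obtain m n where x: "x = (m, n)" by fastforce
      hence "(m, n) \<noteq> (0, 0)" "2 * norm z \<le> norm (lattice_point \<tau> m n)"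
        using that by (auto simp: A_def)
      thus ?thesis
        using wp_summand_le_decay_weight[OF \<kappa> _ lb] unfolding C_def f_def x by (simp only: prod.case mult.assoc)
    qed
    have "(\<lambda>x. C * (case x of (m, n) \<Rightarrow> decay_weight m * decay_weight n)) summable_on A"
      using summable_on_cmult_right[OF decay_weight_product_summable, of C] summable_on_subset_banach
      by blast
    hence "(\<lambda>x. norm (f x)) summable_on A"
      using bound by (rule Infinite_Sum.abs_summable_on_comparison_test')
    thus ?thesis using summable_on_iff_abs_summable_on_complex by blast
  qed
  ultimately have "f summable_on (A \<union> (UNIV - A))" by (intro summable_on_union)
  thus ?thesis unfolding f_def by simp
qed

text \<open>The term of index (0, 0) is 1 / z^2, because 1 / 0 = 0.\<close>
lemma wp_has_sum:
  fixes \<tau> z :: complex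
  assumes "Im \<tau> > 0"
  shows "((\<lambda>(m, n). 1 / (z - lattice_point \<tau> m n)\<^sup>2 - 1 / (lattice_point \<tau> m n)\<^sup>2) has_sum wp z \<tau>) UNIV"
proof -
  define f where "f = (\<lambda>(m, n). 1 / (z - lattice_point \<tau> m n)\<^sup>2 - 1 / (lattice_point \<tau> m n)\<^sup>2)"
  have f: "f summable_on UNIV" unfolding f_def by (rule wp_summable[OF assms])
  have "infsum f (insert (0, 0) (UNIV - {(0, 0)})) = f (0, 0) + infsum f (UNIV - {(0, 0)})"
    by (rule infsum_insert) (auto intro: summable_on_subset_banach[OF f])
  also have "\<dots> = wp z \<tau>" by (simp add: f_def wp_def)
  finally have "infsum f UNIV = wp z \<tau>" by (simp add: insert_absorb)
  thus ?thesis using f unfolding f_def[symmetric] by (metis has_sum_infsum)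
qed

section \<open>Summing a row\<close>

lemma not_Ints_imp_not_nonpos_Ints: "(z :: complex) \<notin> \<int> \<Longrightarrow> z \<notin> \<int>\<^sub>\<le>\<^sub>0"
  using nonpos_Ints_subset_Ints by blast

lemma one_minus_not_Ints: "(z :: complex) \<notin> \<int> \<Longrightarrow> 1 - z \<notin> \<int>"
proof
  assume "z \<notin> \<int>" "1 - z \<in> \<int>"
  hence "1 - (1 - z) \<in> \<int>" by (intro Ints_diff) auto
  thus False using \<open>z \<notin> \<int>\<close> by simp
qed

lemma sin_pi_nonzero: "(z :: complex) \<notin> \<int> \<Longrightarrow> sin (of_real pi * z) \<noteq> 0"
  by (auto simp: sin_eq_0 Ints_def)

text \<open>The logarithmic derivative of the reflection formula for Gamma.\<close>
lemma Digamma_reflection_complex: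
  fixes z :: complex
  assumes z: "z \<notin> \<int>"
  shows "(Digamma z - Digamma (1 - z)) * sin (of_real pi * z) + of_real pi * cos (of_real pi * z) = 0"
proof -
  let ?G = "\<lambda>z::complex. Gamma z * Gamma (1 - z) * sin (of_real pi * z)"
  have z': "z \<notin> \<int>\<^sub>\<le>\<^sub>0" "1 - z \<notin> \<int>\<^sub>\<le>\<^sub>0"
    using z not_Ints_imp_not_nonpos_Ints one_minus_not_Ints by blast+
  have "(?G has_field_derivative
      (Gamma z * Digamma z * Gamma (1 - z) + Gamma z * (Gamma (1 - z) * Digamma (1 - z) * (-1))) * sin (of_real pi * z)
       + Gamma z * Gamma (1 - z) * (cos (of_real pi * z) * of_real pi)) (at z)"
    using z' by (auto intro!: derivative_eq_intros)
  moreover have "(?G has_field_derivative 0) (at z)"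
  proof (rule has_field_derivative_transform_within_open[of "\<lambda>_. of_real pi" _ _ "- \<int>"])
    show "of_real pi = ?G w" if "w \<in> - \<int>" for w
      using that Gamma_reflection_complex[of w] sin_pi_nonzero[of w] by simp
  qed (use z in \<open>auto simp: open_Compl\<close>)
  ultimately have "(Gamma z * Digamma z * Gamma (1 - z) + Gamma z * (Gamma (1 - z) * Digamma (1 - z) * (-1)))
      * sin (of_real pi * z) + Gamma z * Gamma (1 - z) * (cos (of_real pi * z) * of_real pi) = 0"
    by (rule DERIV_unique)
  hence "Gamma z * Gamma (1 - z) *
      ((Digamma z - Digamma (1 - z)) * sin (of_real pi * z) + of_real pi * cos (of_real pi * z)) = 0"
    by (simp add: algebra_simps)
  moreover have "Gamma z \<noteq> 0" "Gamma (1 - z) \<noteq> 0"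
    using z' by (auto simp: Gamma_eq_zero_iff)
  ultimately show ?thesis by simp
qed

lemma minus_pi_cot_has_field_derivative:
  fixes z :: complex
  assumes s: "sin (of_real pi * z) \<noteq> 0"
  shows "((\<lambda>z. - of_real pi * cos (of_real pi * z) / sin (of_real pi * z)) has_field_derivative
     of_real (pi\<^sup>2) / (sin (of_real pi * z))\<^sup>2) (at z)"
proof -
  let ?s = "sin (of_real pi * z)" and ?c = "cos (of_real pi * z)"
  have "((\<lambda>z. - of_real pi * cos (of_real pi * z) / sin (of_real pi * z)) has_field_derivative
     ((- of_real pi * (- ?s * of_real pi)) * ?s - (- of_real pi * ?c) * (?c * of_real pi)) / (?s * ?s)) (at z)"
    by (rule DERIV_divide derivative_eq_intros refl | use s in simp)+
  moreover have "((- c * (- a * c)) * a - (- c * b) * (b * c)) / (a * a) = c ^ 2 * (a\<^sup>2 + b\<^sup>2) / a\<^sup>2"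
    for a b c :: complex
    by (simp add: power2_eq_square algebra_simps)
  ultimately show ?thesis by simp
qed

lemma Polygamma_1_reflection_complex:
  fixes z :: complex
  assumes z: "z \<notin> \<int>"
  shows "Polygamma 1 z + Polygamma 1 (1 - z) = of_real (pi\<^sup>2) / (sin (of_real pi * z))\<^sup>2"
proof -
  let ?D = "\<lambda>z::complex. Digamma z - Digamma (1 - z)"
  have z': "z \<notin> \<int>\<^sub>\<le>\<^sub>0" "1 - z \<notin> \<int>\<^sub>\<le>\<^sub>0"
    using z not_Ints_imp_not_nonpos_Ints one_minus_not_Ints by blast+
  have "(?D has_field_derivative (Polygamma 1 z - Polygamma 1 (1 - z) * (-1))) (at z)"
    using z' by (auto intro!: derivative_eq_intros)
  moreover have "(?D has_field_derivative of_real (pi\<^sup>2) / (sin (of_real pi * z))\<^sup>2) (at z)"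
  proof (rule has_field_derivative_transform_within_open[OF minus_pi_cot_has_field_derivative[OF sin_pi_nonzero[OF z]], of "- \<int>"])
    show "- of_real pi * cos (of_real pi * w) / sin (of_real pi * w) = ?D w" if "w \<in> - \<int>" for w
      using that Digamma_reflection_complex[of w] sin_pi_nonzero[of w] by (simp add: field_simps)
  qed (use z in \<open>auto simp: open_Compl\<close>)
  ultimately have "Polygamma 1 z - Polygamma 1 (1 - z) * (-1) = of_real (pi\<^sup>2) / (sin (of_real pi * z))\<^sup>2"
    by (rule DERIV_unique)
  thus ?thesis by simp
qed

lemma Polygamma_1_has_sum:
  fixes w :: complex
  assumes "w \<notin> \<int>\<^sub>\<le>\<^sub>0"
  shows "((\<lambda>k. 1 / (w + of_nat k)\<^sup>2) has_sum Polygamma 1 w) UNIV"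
proof (rule norm_summable_imp_has_sum)
  have "(\<lambda>k. inverse ((w + of_nat k) ^ Suc 1)) sums ((-1) ^ Suc 1 * Polygamma 1 w / fact 1)"
    using assms by (intro Polygamma_LIMSEQ) auto
  thus "(\<lambda>k. 1 / (w + of_nat k)\<^sup>2) sums Polygamma 1 w"
    by (simp add: numeral_2_eq_2 divide_inverse)
  have "summable (\<lambda>k. norm (1 / (w + of_nat k) ^ 2))"
  proof (rule summable_comparison_test_ev)
    show "summable (\<lambda>k::nat. 4 * inverse (real k ^ 2))"
      using inverse_power_summable[of 2] by (intro summable_mult) auto
    show "\<forall>\<^sub>F k in sequentially. norm (norm (1 / (w + of_nat k) ^ 2)) \<le> 4 * inverse (real k ^ 2)"
      using eventually_gt_at_top[of "nat \<lceil>2 * norm w\<rceil>"]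
    proof eventually_elim
      case (elim k)
      hence k: "real k > 2 * norm w" by linarith
      have "k > 0" using k norm_ge_zero[of w] by linarith
      have "norm (w + of_nat k) \<ge> real k / 2"
        using k norm_diff_ineq[of "of_nat k :: complex" w] by (simp add: add.commute)
      hence "1 / norm (w + of_nat k) ^ 2 \<le> 1 / (real k / 2) ^ 2"
        using \<open>k > 0\<close> by (intro divide_left_mono power_mono mult_pos_pos) auto
      also have "\<dots> = 4 * inverse (real k ^ 2)"
        by (simp add: field_simps)
      finally show ?case by (simp add: norm_divide norm_power)
    qed
  qed
  thus "summable (\<lambda>k. norm (1 / (w + of_nat k)\<^sup>2))" by simp
qed

definition row_kernel :: "complex \<Rightarrow> complex" where
  "row_kernel x = x / (1 - x)\<^sup>2"

lemma pi_sq_div_sin_sq_eq_row_kernel: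
  fixes w :: complex
  assumes s: "sin (of_real pi * w) \<noteq> 0"
  shows "of_real (pi\<^sup>2) / (sin (of_real pi * w))\<^sup>2 = (2 * of_real pi * \<i>)\<^sup>2 * row_kernel (exp (2 * of_real pi * \<i> * w))"
proof -
  define e where "e = exp (\<i> * (of_real pi * w))"
  have e: "e \<noteq> 0" by (simp add: e_def)
  have x: "exp (2 * of_real pi * \<i> * w) = e\<^sup>2"
    by (simp add: e_def power2_eq_square exp_add[symmetric] algebra_simps)
  have sn: "sin (of_real pi * w) = (e - inverse e) / (2 * \<i>)"
    by (simp add: sin_exp_eq e_def exp_minus)
  hence "1 - e\<^sup>2 \<noteq> 0"
    using s e by (auto simp: field_simps power2_eq_square)
  thus ?thesis
    unfolding row_kernel_def x sn using e by (simp add: field_simps power2_eq_square)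
qed

lemma inverse_square_shifts_has_sum:
  fixes w :: complex
  assumes w: "w \<notin> \<int>"
  shows "((\<lambda>m::int. 1 / (w - of_int m)\<^sup>2) has_sum (2 * of_real pi * \<i>)\<^sup>2 * row_kernel (exp (2 * of_real pi * \<i> * w))) UNIV"
proof -
  have "((\<lambda>m::int. 1 / (w - of_int (- m))\<^sup>2) has_sum (Polygamma 1 w + Polygamma 1 (1 - w))) UNIV"
  proof (rule has_sum_int_from_nat)
    show "((\<lambda>k. 1 / (w - of_int (- int k))\<^sup>2) has_sum Polygamma 1 w) UNIV"
      using Polygamma_1_has_sum[of w] w not_Ints_imp_not_nonpos_Ints by simp
    have "((\<lambda>k. 1 / (1 - w + of_nat k)\<^sup>2) has_sum Polygamma 1 (1 - w)) UNIV"
      using w by (intro Polygamma_1_has_sum not_Ints_imp_not_nonpos_Ints one_minus_not_Ints)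
    moreover have "(w - of_int (- (- int k - 1)))\<^sup>2 = (1 - w + of_nat k)\<^sup>2" for k
      by (simp add: power2_eq_square algebra_simps)
    ultimately show "((\<lambda>k. 1 / (w - of_int (- (- int k - 1)))\<^sup>2) has_sum Polygamma 1 (1 - w)) UNIV"
      by simp
  qed
  moreover have "bij_betw uminus (UNIV :: int set) UNIV"
    by (rule bij_betwI[of _ _ _ uminus]) auto
  ultimately have "((\<lambda>m::int. 1 / (w - of_int m)\<^sup>2) has_sum (Polygamma 1 w + Polygamma 1 (1 - w))) UNIV"
    using has_sum_reindex_bij_betw[of uminus UNIV UNIV "\<lambda>m::int. 1 / (w - of_int m)\<^sup>2"] by simp
  thus ?thesis
    using Polygamma_1_reflection_complex[OF w] pi_sq_div_sin_sq_eq_row_kernel[OF sin_pi_nonzero[OF w]] by simp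
qed

lemma wp_diff_has_sum_rows:
  fixes \<tau> z1 z2 :: complex
  assumes "Im \<tau> > 0"
    and "\<And>n::int. z1 - of_int n * \<tau> \<notin> \<int>" and "\<And>n::int. z2 - of_int n * \<tau> \<notin> \<int>"
  shows "((\<lambda>n::int. (2 * of_real pi * \<i>)\<^sup>2 * (row_kernel (exp (2 * of_real pi * \<i> * (z1 - of_int n * \<tau>)))
                                          - row_kernel (exp (2 * of_real pi * \<i> * (z2 - of_int n * \<tau>)))))
          has_sum (wp z1 \<tau> - wp z2 \<tau>)) UNIV"
proof -
  define g where "g = (\<lambda>(n, m). 1 / (z1 - lattice_point \<tau> m n)\<^sup>2 - 1 / (z2 - lattice_point \<tau> m n)\<^sup>2)"
  have "((\<lambda>(m, n). g (n, m)) has_sum (wp z1 \<tau> - wp z2 \<tau>)) UNIV"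
    using has_sum_diff[OF wp_has_sum[OF assms(1), of z1] wp_has_sum[OF assms(1), of z2]]
    by (simp add: g_def case_prod_unfold)
  hence "(g has_sum (wp z1 \<tau> - wp z2 \<tau>)) (Sigma UNIV (\<lambda>_. UNIV))"
    using has_sum_swap[of g "UNIV :: int set" "UNIV :: int set"] by (simp add: case_prod_unfold)
  moreover have "((\<lambda>m. g (n, m)) has_sum (2 * of_real pi * \<i>)\<^sup>2 *
      (row_kernel (exp (2 * of_real pi * \<i> * (z1 - of_int n * \<tau>)))
       - row_kernel (exp (2 * of_real pi * \<i> * (z2 - of_int n * \<tau>))))) UNIV" for n
  proof -
    have "g (n, m) = 1 / ((z1 - of_int n * \<tau>) - of_int m)\<^sup>2 - 1 / ((z2 - of_int n * \<tau>) - of_int m)\<^sup>2" for m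
      by (simp add: g_def algebra_simps)
    thus ?thesis
      using has_sum_diff[OF inverse_square_shifts_has_sum[OF assms(2)] inverse_square_shifts_has_sum[OF assms(3)]]
      by (simp add: right_diff_distrib)
  qed
  ultimately show ?thesis by (rule has_sum_Sigma')
qed

lemma exp_2pi_i_Ints: "w \<in> \<int> \<Longrightarrow> exp (2 * of_real pi * \<i> * w) = 1"
proof (elim Ints_cases)
  fix k assume "w = of_int k"
  hence "exp (2 * of_real pi * \<i> * w) = exp (2 * of_real pi * \<i>) powi k"
    by (simp add: exp_power_int[symmetric] mult.commute)
  thus ?thesis by simp
qed

lemma unit_times_powi_ne_1:
  fixes Q \<zeta> :: complex
  assumes "Q \<noteq> 0" "norm Q < 1" "norm \<zeta> = 1" "e \<noteq> 0"
  shows "\<zeta> * Q powi e \<noteq> 1"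
proof
  assume "\<zeta> * Q powi e = 1"
  hence "norm Q powi e = 1" using assms(3) by (metis norm_mult norm_one norm_power_int mult_1)
  moreover have "norm Q > 0" using assms(1) by simp
  ultimately show False
  proof (cases "e > 0")
    case True
    hence "norm Q powi e = norm Q ^ nat e" by (simp add: power_int_def)
    also have "\<dots> < 1" using True \<open>norm Q > 0\<close> assms(2) by (simp add: power_less_one_iff)
    finally show False using \<open>norm Q powi e = 1\<close> by simp
  next
    case False
    hence "norm Q powi e = inverse (norm Q ^ nat (- e))" using assms(4) by (simp add: power_int_def power_inverse)
    moreover have "norm Q ^ nat (- e) < 1" using False assms(2,4) \<open>norm Q > 0\<close> by (simp add: power_less_one_iff)
    ultimately have "norm Q powi e > 1" using \<open>norm Q > 0\<close> by (simp add: one_less_inverse)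
    thus False using \<open>norm Q powi e = 1\<close> by simp
  qed
qed

lemma wp_diff_eq_row_sums:
  fixes \<tau> Q \<zeta>1 \<zeta>2 z1 z2 X1 X2 :: complex and A1 A2 M :: int
  assumes "Im \<tau> > 0" "Q \<noteq> 0" "norm Q < 1" "norm \<zeta>1 = 1" "norm \<zeta>2 = 1"
    and e1: "\<And>n. exp (2 * of_real pi * \<i> * (z1 - of_int n * \<tau>)) = \<zeta>1 * Q powi (A1 - n * M)"
    and e2: "\<And>n. exp (2 * of_real pi * \<i> * (z2 - of_int n * \<tau>)) = \<zeta>2 * Q powi (A2 - n * M)"
    and "M dvd A1 \<Longrightarrow> \<zeta>1 \<noteq> 1" "M dvd A2 \<Longrightarrow> \<zeta>2 \<noteq> 1"
    and "((\<lambda>n. row_kernel (\<zeta>1 * Q powi (A1 - n * M))) has_sum X1) UNIV"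
    and "((\<lambda>n. row_kernel (\<zeta>2 * Q powi (A2 - n * M))) has_sum X2) UNIV"
  shows "wp z1 \<tau> - wp z2 \<tau> = (2 * of_real pi * \<i>)\<^sup>2 * (X1 - X2)"
proof -
  have ne1: "\<zeta> * Q powi (A - n * M) \<noteq> 1" if "norm \<zeta> = 1" "M dvd A \<Longrightarrow> \<zeta> \<noteq> 1" for \<zeta> A n
  proof (cases "A - n * M = 0")
    case True
    hence "M dvd A" by (metis dvd_triv_right eq_iff_diff_eq_0)
    thus ?thesis using True that by simp
  next
    case False
    thus ?thesis using unit_times_powi_ne_1[OF assms(2,3) that(1)] by blast
  qed
  have nonint: "z1 - of_int n * \<tau> \<notin> \<int>" "z2 - of_int n * \<tau> \<notin> \<int>" for n
    using exp_2pi_i_Ints[of "z1 - of_int n * \<tau>"] exp_2pi_i_Ints[of "z2 - of_int n * \<tau>"] e1[of n] e2[of n]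
      ne1[of \<zeta>1 A1 n, OF assms(4,8)] ne1[of \<zeta>2 A2 n, OF assms(5,9)] by auto
  have "((\<lambda>n. (2 * of_real pi * \<i>)\<^sup>2 * (row_kernel (\<zeta>1 * Q powi (A1 - n * M)) - row_kernel (\<zeta>2 * Q powi (A2 - n * M))))
      has_sum (wp z1 \<tau> - wp z2 \<tau>)) UNIV"
    using wp_diff_has_sum_rows[OF assms(1) nonint] by (simp only: e1 e2)
  moreover have "((\<lambda>n. (2 * of_real pi * \<i>)\<^sup>2 * (row_kernel (\<zeta>1 * Q powi (A1 - n * M)) - row_kernel (\<zeta>2 * Q powi (A2 - n * M))))
      has_sum (2 * of_real pi * \<i>)\<^sup>2 * (X1 - X2)) UNIV"
    using assms(10,11) by (intro has_sum_cmult_right has_sum_diff)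
  ultimately show ?thesis by (rule has_sum_unique)
qed

section \<open>The modular substitution\<close>

lemma moebius_denom_nonzero:
  fixes p q r s :: int and \<tau> :: complex
  assumes "p * s - q * r = 1" and "Im \<tau> > 0"
  shows "of_int r * \<tau> + of_int s \<noteq> 0"
proof (cases "r = 0")
  case True
  thus ?thesis using assms(1) by auto
next
  case False
  hence "Im (of_int r * \<tau> + of_int s) \<noteq> 0" using assms(2) by simp
  thus ?thesis by (metis zero_complex.sel(2))
qed

lemma bij_betw_lattice_transform:
  fixes p q r s :: int
  assumes det: "p * s - q * r = 1"
  shows "bij_betw (\<lambda>(m, n). (m * s + n * q, m * r + n * p)) (UNIV - {(0, 0)}) (UNIV - {(0, 0)})"
proof -
  define \<phi> :: "int \<times> int \<Rightarrow> int \<times> int" where "\<phi> = (\<lambda>(m, n). (m * s + n * q, m * r + n * p))"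
  define \<psi> :: "int \<times> int \<Rightarrow> int \<times> int" where "\<psi> = (\<lambda>(a, b). (a * p - b * q, b * s - a * r))"
  have "\<psi> (\<phi> k) = k" "\<phi> (\<psi> k) = k" for k
  proof -
    obtain m n where k: "k = (m, n)" by fastforce
    have "\<psi> (\<phi> k) = (m * (p * s - q * r), n * (p * s - q * r))"
      "\<phi> (\<psi> k) = (m * (p * s - q * r), n * (p * s - q * r))"
      unfolding k \<phi>_def \<psi>_def by (simp_all add: algebra_simps)
    thus "\<psi> (\<phi> k) = k" "\<phi> (\<psi> k) = k" using det k by simp_all
  qed
  hence "bij_betw \<phi> UNIV UNIV" by (intro bij_betwI[of _ _ _ \<psi>]) auto
  moreover have "bij_betw \<phi> {(0, 0)} {(0, 0)}" by (simp add: \<phi>_def)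
  ultimately show ?thesis unfolding \<phi>_def by (rule bij_betw_DiffI) auto
qed

lemma wp_moebius:
  fixes p q r s :: int and \<tau> x :: complex
  assumes det: "p * s - q * r = 1" and "Im \<tau> > 0"
  defines "j \<equiv> of_int r * \<tau> + of_int s"
  shows "wp x (moebius p q r s \<tau>) = j\<^sup>2 * wp (x * j) \<tau>"
proof -
  have j: "j \<noteq> 0" unfolding j_def using moebius_denom_nonzero[OF assms(1,2)] .
  define \<tau>' where "\<tau>' = moebius p q r s \<tau>"
  define \<phi> :: "int \<times> int \<Rightarrow> int \<times> int" where "\<phi> = (\<lambda>(m, n). (m * s + n * q, m * r + n * p))"
  define h where "h = (\<lambda>(m, n). 1 / (x * j - lattice_point \<tau> m n)\<^sup>2 - 1 / (lattice_point \<tau> m n)\<^sup>2)"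
  define h' where "h' = (\<lambda>(m, n). 1 / (x - lattice_point \<tau>' m n)\<^sup>2 - 1 / (lattice_point \<tau>' m n)\<^sup>2)"
  have h': "h' k = j\<^sup>2 * h (\<phi> k)" for k
  proof -
    obtain m n where k: "k = (m, n)" by fastforce
    have "lattice_point \<tau>' m n = lattice_point \<tau> (m * s + n * q) (m * r + n * p) / j"
      using j unfolding \<tau>'_def moebius_def j_def by (simp add: field_simps)
    moreover have "x - w / j = (x * j - w) / j" for w using j by (simp add: field_simps)
    ultimately show ?thesis
      unfolding k h'_def h_def \<phi>_def by (simp add: power_divide right_diff_distrib)
  qed
  have bij: "bij_betw \<phi> (UNIV - {(0, 0)}) (UNIV - {(0, 0)})"
    unfolding \<phi>_def by (rule bij_betw_lattice_transform[OF det])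
  have "infsum h' (UNIV - {(0, 0)}) = infsum (\<lambda>k. j\<^sup>2 * h (\<phi> k)) (UNIV - {(0, 0)})"
    by (rule infsum_cong) (rule h')
  also have "\<dots> = j\<^sup>2 * infsum (\<lambda>k. h (\<phi> k)) (UNIV - {(0, 0)})"
    by (rule infsum_cmult_right')
  also have "infsum (\<lambda>k. h (\<phi> k)) (UNIV - {(0, 0)}) = infsum h (UNIV - {(0, 0)})"
    by (rule infsum_reindex_bij_betw[OF bij])
  finally have "infsum h' (UNIV - {(0, 0)}) = j\<^sup>2 * infsum h (UNIV - {(0, 0)})" .
  moreover have "j\<^sup>2 * (1 / (x * j)\<^sup>2) = 1 / x\<^sup>2"
    using j by (cases "x = 0") (simp_all add: field_simps power_mult_distrib)
  ultimately have "wp x \<tau>' = j\<^sup>2 * wp (x * j) \<tau>"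
    unfolding wp_def h_def h'_def by (simp add: distrib_left)
  thus ?thesis unfolding \<tau>'_def .
qed

lemma W_moebius:
  fixes N a1 a2 a3 a4 p q r s :: int and \<tau> :: complex
  assumes "p * s - q * r = 1" and "Im \<tau> > 0"
  defines "j \<equiv> of_int r * \<tau> + of_int s"
  shows "W N a1 a2 a3 a4 (moebius p q r s \<tau>) =
    (wp (of_int a1 / of_int N * j) \<tau> - wp (of_int a2 / of_int N * j) \<tau>) /
    (wp (of_int a3 / of_int N * j) \<tau> - wp (of_int a4 / of_int N * j) \<tau>)"
proof -
  have "j\<^sup>2 \<noteq> 0" unfolding j_def using moebius_denom_nonzero[OF assms(1,2)] by simp
  thus ?thesis
    unfolding W_def wp_moebius[OF assms(1,2)] j_def[symmetric]
    by (simp add: right_diff_distrib[symmetric])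
qed

section \<open>q-expansion of the row sums\<close>

lemma row_kernel_inverse: "row_kernel (inverse x) = row_kernel x"
proof (cases "x = 0 \<or> x = 1")
  case False
  hence "x - 1 \<noteq> 0" "1 - x \<noteq> 0" by auto
  with False show ?thesis
    unfolding row_kernel_def by (simp add: field_simps power2_eq_square)
qed auto

text \<open>For b \<le> e this is row_kernel (u * Q ^ e) / Q ^ b, written so as to be holomorphic at Q = 0.\<close>
definition shifted_row_kernel :: "complex \<Rightarrow> nat \<Rightarrow> nat \<Rightarrow> complex \<Rightarrow> complex" where
  "shifted_row_kernel u b e Q = (if e = 0 then row_kernel u else u * Q ^ (e - b) / (1 - u * Q ^ e)\<^sup>2)"

lemma row_kernel_eq_shifted:
  assumes "b \<le> e"
  shows "row_kernel (u * Q ^ e) = Q ^ b * shifted_row_kernel u b e Q"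
proof (cases "e = 0")
  case False
  have "Q ^ e = Q ^ b * Q ^ (e - b)" using assms by (simp flip: power_add)
  thus ?thesis using False by (simp add: row_kernel_def shifted_row_kernel_def)
qed (use assms in \<open>simp add: shifted_row_kernel_def\<close>)

lemma shifted_row_kernel_at_0:
  "b \<le> e \<Longrightarrow> shifted_row_kernel u b e 0 = (if e = 0 then row_kernel u else if e = b then u else 0)"
  by (auto simp: shifted_row_kernel_def power_0_left)

lemma norm_unit_times_power_less_1:
  fixes u Q :: complex
  assumes "norm u = 1" "norm Q < 1" "e > 0"
  shows "norm (u * Q ^ e) < 1"
  using assms by (simp add: norm_mult norm_power power_less_one_iff)

lemma shifted_row_kernel_holomorphic:
  assumes "norm u = 1"
  shows "shifted_row_kernel u b e holomorphic_on ball 0 1"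
proof (cases "e = 0")
  case False
  have "1 - u * Q ^ e \<noteq> 0" if "Q \<in> ball 0 1" for Q
    using norm_unit_times_power_less_1[of u Q e] assms False that by auto
  thus ?thesis unfolding shifted_row_kernel_def using False by (auto intro!: holomorphic_intros)
next
  case True
  thus ?thesis unfolding shifted_row_kernel_def by simp
qed

lemma shifted_row_kernel_bound:
  assumes u: "norm u = 1" and Q: "norm Q \<le> 1/2" and "e > 0"
  shows "norm (shifted_row_kernel u b e Q) \<le> 4 * (1/2) ^ (e - b)"
proof -
  have "norm (u * Q ^ e) \<le> norm Q"
    using u Q \<open>e > 0\<close> by (simp add: norm_mult norm_power power_le_one power_decreasing[of 1 e "norm Q", simplified])
  hence "norm (1 - u * Q ^ e) \<ge> 1/2"
    using norm_triangle_ineq2[of 1 "u * Q ^ e"] Q by (simp add: norm_minus_commute)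
  moreover have "norm (u * Q ^ (e - b)) \<le> (1/2) ^ (e - b)"
    using u Q by (simp add: norm_mult norm_power power_mono)
  ultimately have "norm (u * Q ^ (e - b)) / norm (1 - u * Q ^ e) ^ 2 \<le> (1/2) ^ (e - b) / (1/2) ^ 2"
    by (intro frac_le power_mono) auto
  thus ?thesis
    using \<open>e > 0\<close> by (simp add: shifted_row_kernel_def norm_divide norm_power field_simps)
qed

lemma holomorphic_series_comparison:
  fixes f :: "nat \<Rightarrow> complex \<Rightarrow> complex" and h :: "nat \<Rightarrow> real"
  assumes S: "open S" and hol: "\<And>n. f n holomorphic_on S" and h: "summable h"
    and bound: "\<And>n x. n \<ge> 1 \<Longrightarrow> x \<in> S \<Longrightarrow> norm (f n x) \<le> h n"
  obtains g where "g holomorphic_on S" and "\<And>x. x \<in> S \<Longrightarrow> (\<lambda>n. f n x) sums g x"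
    and "\<And>x. x \<in> S \<Longrightarrow> summable (\<lambda>n. norm (f n x))"
proof -
  have f': "(f n has_field_derivative deriv (f n) x) (at x)" if "x \<in> S" for n x
    using holomorphic_derivI[OF hol S that] .
  have to_g: "\<forall>\<^sub>F n in sequentially. \<forall>x\<in>S. norm (f n x) \<le> h n"
    using eventually_ge_at_top[of 1] by eventually_elim (auto intro: bound)
  obtain g g' where g: "\<forall>x\<in>S. ((\<lambda>n. f n x) sums g x) \<and>
      ((\<lambda>n. deriv (f n) x) sums g' x) \<and> (g has_field_derivative g' x) (at x)"
    by (rule series_and_derivative_comparison[where f = f and f' = "\<lambda>n. deriv (f n)", OF S h f' to_g])
  show ?thesis
  proof
    show "g holomorphic_on S" using g S by (subst holomorphic_on_open) auto
    show "(\<lambda>n. f n x) sums g x" if "x \<in> S" for x using g that by blast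
    show "summable (\<lambda>n. norm (f n x))" if "x \<in> S" for x
    proof (rule summable_comparison_test_ev[OF _ h])
      show "\<forall>\<^sub>F n in sequentially. norm (norm (f n x)) \<le> h n"
        using eventually_ge_at_top[of 1] by eventually_elim (simp add: bound that)
    qed
  qed
qed

lemma holomorphic_lowest_power_factor:
  fixes g1 g2 :: "complex \<Rightarrow> complex" and b1 b2 :: nat
  assumes "g1 holomorphic_on S" "g2 holomorphic_on S"
  obtains G where "G holomorphic_on S"
    and "G 0 = (if b1 \<le> b2 then g1 0 else 0) - (if b2 \<le> b1 then g2 0 else 0)"
    and "\<And>Q. Q ^ b1 * g1 Q - Q ^ b2 * g2 Q = Q ^ min b1 b2 * G Q"
proof
  show "(\<lambda>Q. Q ^ (b1 - min b1 b2) * g1 Q - Q ^ (b2 - min b1 b2) * g2 Q) holomorphic_on S"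
    using assms by (intro holomorphic_intros)
  show "0 ^ (b1 - min b1 b2) * g1 0 - 0 ^ (b2 - min b1 b2) * g2 0
      = (if b1 \<le> b2 then g1 0 else 0) - (if b2 \<le> b1 then g2 0 else 0)"
    by (simp add: power_0_left)
  show "Q ^ b1 * g1 Q - Q ^ b2 * g2 Q
      = Q ^ min b1 b2 * (Q ^ (b1 - min b1 b2) * g1 Q - Q ^ (b2 - min b1 b2) * g2 Q)" for Q
    by (simp add: algebra_simps flip: power_add)
qed

lemma row_kernel_series_q_expansion:
  fixes u :: complex and b d M :: nat
  assumes u: "norm u = 1" and "M > 0" and "b \<le> d"
  obtains g where "g holomorphic_on ball 0 (1/2)" and "g 0 = shifted_row_kernel u b d 0"
    and "\<And>Q. norm Q < 1/2 \<Longrightarrow> ((\<lambda>k. row_kernel (u * Q ^ (d + k * M))) has_sum Q ^ b * g Q) UNIV"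
proof -
  define f where "f k = shifted_row_kernel u b (d + k * M)" for k
  have exps: "d + k * M \<noteq> 0" "b < d + k * M" "k \<le> d + k * M - b" if "k \<ge> 1" for k
  proof -
    have "k \<le> k * M" using \<open>M > 0\<close> by simp
    thus "d + k * M \<noteq> 0" "b < d + k * M" "k \<le> d + k * M - b" using that \<open>b \<le> d\<close> by linarith+
  qed
  have "norm (f k Q) \<le> 4 * (1/2) ^ k" if "k \<ge> 1" "Q \<in> ball 0 (1/2)" for k Q
  proof -
    have "norm (f k Q) \<le> 4 * (1/2) ^ (d + k * M - b)"
      unfolding f_def using that(2) exps(1)[OF that(1)] by (intro shifted_row_kernel_bound[OF u]) simp_all
    also have "\<dots> \<le> 4 * (1/2) ^ k"
      using exps(3)[OF that(1)] by (intro mult_left_mono power_decreasing) auto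
    finally show ?thesis .
  qed
  moreover have "f k holomorphic_on ball 0 (1/2)" for k
    unfolding f_def by (rule holomorphic_on_subset[OF shifted_row_kernel_holomorphic[OF u]]) auto
  moreover have "summable (\<lambda>k. 4 * (1/2 :: real) ^ k)" by (intro summable_mult summable_geometric) auto
  ultimately obtain g where g: "g holomorphic_on ball 0 (1/2)"
    "\<And>Q. Q \<in> ball 0 (1/2) \<Longrightarrow> (\<lambda>k. f k Q) sums g Q"
    "\<And>Q. Q \<in> ball 0 (1/2) \<Longrightarrow> summable (\<lambda>k. norm (f k Q))"
    using holomorphic_series_comparison[of "ball 0 (1/2)" f] by (metis open_ball)
  show ?thesis
  proof
    show "g holomorphic_on ball 0 (1/2)" by (fact g(1))
    have "f k 0 = 0" if "k \<noteq> 0" for k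
      using exps[of k] that \<open>b \<le> d\<close> by (auto simp: f_def shifted_row_kernel_at_0)
    hence "(\<lambda>k. f k 0) = (\<lambda>k. if k = 0 then f 0 0 else 0)" by auto
    hence "(\<lambda>k. f k 0) sums f 0 0" using sums_single[of 0 "\<lambda>_. f 0 0"] by simp
    thus "g 0 = shifted_row_kernel u b d 0" using g(2)[of 0] by (simp add: sums_unique2 f_def)
  next
    fix Q :: complex assume Q: "norm Q < 1/2"
    hence "(\<lambda>k. Q ^ b * f k Q) sums (Q ^ b * g Q)" using g(2) by (intro sums_mult) simp
    moreover have "summable (\<lambda>k. norm (Q ^ b * f k Q))"
    proof (rule summable_comparison_test[OF _ g(3)])
      have "norm (Q ^ b) \<le> 1" using Q by (simp add: norm_power power_le_one)
      thus "\<exists>N. \<forall>k\<ge>N. norm (norm (Q ^ b * f k Q)) \<le> norm (f k Q)"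
        by (simp add: norm_mult mult_left_le_one_le)
    qed (use Q in simp)
    ultimately have "((\<lambda>k. Q ^ b * f k Q) has_sum (Q ^ b * g Q)) UNIV"
      by (intro norm_summable_imp_has_sum)
    moreover have "row_kernel (u * Q ^ (d + k * M)) = Q ^ b * f k Q" for k
      unfolding f_def using \<open>b \<le> d\<close> by (intro row_kernel_eq_shifted) simp
    ultimately show "((\<lambda>k. row_kernel (u * Q ^ (d + k * M))) has_sum Q ^ b * g Q) UNIV"
      by simp
  qed
qed

lemma has_sum_int_mod_shift:
  fixes F :: "int \<Rightarrow> 'a::topological_comm_monoid_add" and A M :: int
  shows "((\<lambda>n. F (A - n * M)) has_sum X) UNIV \<longleftrightarrow> ((\<lambda>n. F (A mod M + n * M)) has_sum X) UNIV"
proof -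
  have "bij_betw (\<lambda>n. A div M - n) UNIV UNIV"
    by (rule bij_betwI[of _ _ _ "\<lambda>n. A div M - n"]) auto
  moreover have "A mod M + (A div M - n) * M = A - n * M" for n
    using div_mult_mod_eq[of A M] by (simp add: algebra_simps)
  ultimately show ?thesis
    using has_sum_reindex_bij_betw[of "\<lambda>n. A div M - n" UNIV UNIV "\<lambda>n. F (A mod M + n * M)" X] by simp
qed

text \<open>The distance from n to the nearest multiple of M; for M = N div D it is the integer
  {n}_D of the paper (see brace_eq_mod_dist).\<close>
definition mod_dist :: "int \<Rightarrow> int \<Rightarrow> int" where
  "mod_dist M n = min (n mod M) (M - n mod M)"

lemma mod_dist_nonneg:
  assumes "M > 0"
  shows "mod_dist M n \<ge> 0"
proof -
  have "0 \<le> n mod M" "n mod M < M" using assms by simp_all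
  thus ?thesis by (simp add: mod_dist_def)
qed

lemma mod_dist_cong: "[m = n] (mod M) \<Longrightarrow> mod_dist M m = mod_dist M n"
  by (simp add: mod_dist_def cong_def)

text \<open>The value at Q = 0 of the holomorphic factor in row_kernel_int_series_q_expansion.\<close>
definition q_lead :: "complex \<Rightarrow> int \<Rightarrow> int \<Rightarrow> complex" where
  "q_lead \<zeta> c M = (if c = 0 then row_kernel \<zeta> else if c \<le> M - c then \<zeta> else 0)
                   + (if M - c \<le> c then inverse \<zeta> else 0)"

text \<open>The terms with n \<le> A div M contribute row_kernel (\<zeta> * Q ^ e) with e \<ge> A mod M;
  by row_kernel_inverse the others contribute row_kernel (inverse \<zeta> * Q ^ e)
  with e \<ge> M - A mod M.\<close>
lemma row_kernel_int_series_q_expansion: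
  fixes \<zeta> :: complex and A M :: int
  assumes \<zeta>: "norm \<zeta> = 1" and M: "M > 0"
  obtains g where "g holomorphic_on ball 0 (1/2)" and "g 0 = q_lead \<zeta> (A mod M) M"
    and "\<And>Q. Q \<noteq> 0 \<Longrightarrow> norm Q < 1/2 \<Longrightarrow>
      ((\<lambda>n. row_kernel (\<zeta> * Q powi (A - n * M))) has_sum Q ^ nat (mod_dist M A) * g Q) UNIV"
proof -
  define c where "c = A mod M"
  define b where "b = nat (mod_dist M A)"
  have c: "0 \<le> c" "c < M" using M by (simp_all add: c_def)
  have b: "b \<le> nat c" "b \<le> nat (M - c)" using c by (auto simp: b_def mod_dist_def c_def)
  have \<zeta>': "norm (inverse \<zeta>) = 1" using \<zeta> by (simp add: norm_inverse)
  obtain g1 where g1: "g1 holomorphic_on ball 0 (1/2)" "g1 0 = shifted_row_kernel \<zeta> b (nat c) 0"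
    "\<And>Q. norm Q < 1/2 \<Longrightarrow> ((\<lambda>k. row_kernel (\<zeta> * Q ^ (nat c + k * nat M))) has_sum Q ^ b * g1 Q) UNIV"
    using row_kernel_series_q_expansion[OF \<zeta> _ b(1), of "nat M"] M by auto
  obtain g2 where g2: "g2 holomorphic_on ball 0 (1/2)" "g2 0 = shifted_row_kernel (inverse \<zeta>) b (nat (M - c)) 0"
    "\<And>Q. norm Q < 1/2 \<Longrightarrow>
      ((\<lambda>k. row_kernel (inverse \<zeta> * Q ^ (nat (M - c) + k * nat M))) has_sum Q ^ b * g2 Q) UNIV"
    using row_kernel_series_q_expansion[OF \<zeta>' _ b(2), of "nat M"] M by auto
  show ?thesis
  proof
    show "(\<lambda>Q. g1 Q + g2 Q) holomorphic_on ball 0 (1/2)" using g1(1) g2(1) by (intro holomorphic_intros)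
    show "g1 0 + g2 0 = q_lead \<zeta> (A mod M) M"
      using b c unfolding g1(2) g2(2) c_def[symmetric]
      by (auto simp: shifted_row_kernel_at_0 q_lead_def b_def mod_dist_def c_def)
  next
    fix Q :: complex assume Q: "Q \<noteq> 0" "norm Q < 1/2"
    have "((\<lambda>n. row_kernel (\<zeta> * Q powi (c + n * M))) has_sum (Q ^ b * g1 Q + Q ^ b * g2 Q)) UNIV"
    proof (rule has_sum_int_from_nat)
      have pos: "Q powi (c + int k * M) = Q ^ (nat c + k * nat M)" for k
      proof -
        have "c + int k * M = int (nat c + k * nat M)" using c M by simp
        thus ?thesis by (simp only: power_int_of_nat)
      qed
      show "((\<lambda>k. row_kernel (\<zeta> * Q powi (c + int k * M))) has_sum Q ^ b * g1 Q) UNIV"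
        unfolding pos by (rule g1(3)[OF Q(2)])
      have neg: "\<zeta> * Q powi (c + (- int k - 1) * M) = inverse (inverse \<zeta> * Q ^ (nat (M - c) + k * nat M))" for k
      proof -
        have "c + (- int k - 1) * M = - int (nat (M - c) + k * nat M)" using c M by (simp add: algebra_simps)
        hence "Q powi (c + (- int k - 1) * M) = inverse (Q ^ (nat (M - c) + k * nat M))"
          by (simp only: power_int_minus power_int_of_nat)
        thus ?thesis by (simp add: mult.commute)
      qed
      show "((\<lambda>k. row_kernel (\<zeta> * Q powi (c + (- int k - 1) * M))) has_sum Q ^ b * g2 Q) UNIV"
        unfolding neg row_kernel_inverse by (rule g2(3)[OF Q(2)])
    qed
    thus "((\<lambda>n. row_kernel (\<zeta> * Q powi (A - n * M))) has_sum Q ^ nat (mod_dist M A) * (g1 Q + g2 Q)) UNIV"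
      using has_sum_int_mod_shift[of "\<lambda>e. row_kernel (\<zeta> * Q powi e)" A M] by (simp add: b_def c_def distrib_left)
  qed
qed

section \<open>The leading coefficient\<close>

lemma row_kernel_diff:
  assumes "x \<noteq> 1" "y \<noteq> 1"
  shows "row_kernel x - row_kernel y = (x - y) * (1 - x * y) / ((1 - x)\<^sup>2 * (1 - y)\<^sup>2)"
proof -
  have "(1 - x)\<^sup>2 \<noteq> 0" "(1 - y)\<^sup>2 \<noteq> 0" using assms by auto
  hence "row_kernel x - row_kernel y = (x * (1 - y)\<^sup>2 - y * (1 - x)\<^sup>2) / ((1 - x)\<^sup>2 * (1 - y)\<^sup>2)"
    unfolding row_kernel_def by (rule diff_frac_eq)
  also have "x * (1 - y)\<^sup>2 - y * (1 - x)\<^sup>2 = (x - y) * (1 - x * y)"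
    by (simp add: power2_eq_square algebra_simps)
  finally show ?thesis .
qed

lemma q_lead_nonzero:
  assumes "0 \<le> c" "c < M" "2 * c \<noteq> M" "\<zeta> \<noteq> 0" "c = 0 \<Longrightarrow> \<zeta> \<noteq> 1"
  shows "q_lead \<zeta> c M \<noteq> 0"
  using assms by (auto simp: q_lead_def row_kernel_def)

lemma q_lead_neq:
  fixes \<zeta>1 \<zeta>2 :: complex and c1 c2 M :: int
  assumes c1: "0 \<le> c1" "c1 < M" and c2: "0 \<le> c2" "c2 < M"
    and b: "min c1 (M - c1) = min c2 (M - c2)"
    and \<zeta>: "\<zeta>1 \<noteq> 0" "\<zeta>2 \<noteq> 0"
    and h1: "c1 = 0 \<Longrightarrow> \<zeta>1 \<noteq> 1" and h2: "c2 = 0 \<Longrightarrow> \<zeta>2 \<noteq> 1"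
    and hp: "c1 = c2 \<Longrightarrow> \<zeta>1 \<noteq> \<zeta>2"
    and hm: "c1 + c2 = 0 \<or> c1 + c2 = M \<Longrightarrow> \<zeta>1 * \<zeta>2 \<noteq> 1"
  shows "q_lead \<zeta>1 c1 M \<noteq> q_lead \<zeta>2 c2 M"
proof -
  define m where "m = min c1 (M - c1)"
  have "0 \<le> m" "2 * m \<le> M" using c1 by (auto simp: m_def min_def)
  then consider "m = 0" | "0 < m" "2 * m < M" | "2 * m = M" by linarith
  thus ?thesis
  proof cases
    case 1
    hence "c1 = 0" "c2 = 0" using b c1 c2 unfolding m_def by auto
    hence "q_lead \<zeta>1 c1 M - q_lead \<zeta>2 c2 M = (\<zeta>1 - \<zeta>2) * (1 - \<zeta>1 * \<zeta>2) / ((1 - \<zeta>1)\<^sup>2 * (1 - \<zeta>2)\<^sup>2)"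
      using h1 h2 c1 by (simp add: q_lead_def row_kernel_diff)
    moreover have "\<zeta>1 - \<zeta>2 \<noteq> 0" "1 - \<zeta>1 * \<zeta>2 \<noteq> 0" "1 - \<zeta>1 \<noteq> 0" "1 - \<zeta>2 \<noteq> 0"
      using \<open>c1 = 0\<close> \<open>c2 = 0\<close> h1 h2 hp hm by auto
    ultimately have "q_lead \<zeta>1 c1 M - q_lead \<zeta>2 c2 M \<noteq> 0" by simp
    thus ?thesis by simp
  next
    case 2
    have c: "c1 = m \<or> c1 = M - m" "c2 = m \<or> c2 = M - m" using b unfolding m_def by auto
    have q: "q_lead \<zeta> c M = (if c = m then \<zeta> else inverse \<zeta>)" if "c = m \<or> c = M - m" for \<zeta> c
      using that 2 by (auto simp: q_lead_def)
    show ?thesis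
    proof (cases "c1 = c2")
      case True
      thus ?thesis using hp q c by auto
    next
      case False
      hence "c1 + c2 = M" using c by auto
      hence "\<zeta>1 \<noteq> inverse \<zeta>2" "inverse \<zeta>1 \<noteq> \<zeta>2" using hm \<zeta> by (auto simp: field_simps)
      thus ?thesis using False q c by auto
    qed
  next
    case 3
    hence "c1 = m" "c2 = m" using b unfolding m_def by (auto simp: min_def split: if_splits)
    hence "q_lead \<zeta>1 c1 M - q_lead \<zeta>2 c2 M = (\<zeta>1 - \<zeta>2) * (\<zeta>1 * \<zeta>2 - 1) / (\<zeta>1 * \<zeta>2)"
      using 3 c1 \<zeta> by (simp add: q_lead_def field_simps)
    moreover have "\<zeta>1 - \<zeta>2 \<noteq> 0" "\<zeta>1 * \<zeta>2 - 1 \<noteq> 0" using \<open>c1 = m\<close> \<open>c2 = m\<close> 3 hp hm by auto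
    ultimately have "q_lead \<zeta>1 c1 M - q_lead \<zeta>2 c2 M \<noteq> 0" using \<zeta> by simp
    thus ?thesis by simp
  qed
qed

lemma q_lead_pair_nonzero:
  fixes \<zeta>1 \<zeta>2 :: complex and c1 c2 M :: int
  assumes c1: "0 \<le> c1" "c1 < M" and c2: "0 \<le> c2" "c2 < M"
    and \<zeta>: "\<zeta>1 \<noteq> 0" "\<zeta>2 \<noteq> 0"
    and h1: "c1 = 0 \<Longrightarrow> \<zeta>1 \<noteq> 1" and h2: "c2 = 0 \<Longrightarrow> \<zeta>2 \<noteq> 1"
    and hp: "c1 = c2 \<Longrightarrow> \<zeta>1 \<noteq> \<zeta>2"
    and hm: "c1 + c2 = 0 \<or> c1 + c2 = M \<Longrightarrow> \<zeta>1 * \<zeta>2 \<noteq> 1"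
  defines "b1 \<equiv> min c1 (M - c1)" and "b2 \<equiv> min c2 (M - c2)"
  shows "(if b1 \<le> b2 then q_lead \<zeta>1 c1 M else 0) - (if b2 \<le> b1 then q_lead \<zeta>2 c2 M else 0) \<noteq> 0"
proof -
  consider "b1 < b2" | "b2 < b1" | "b1 = b2" by linarith
  thus ?thesis
  proof cases
    case 1
    hence "2 * c1 \<noteq> M" using c2 unfolding b1_def b2_def by auto
    thus ?thesis using 1 q_lead_nonzero[OF c1 _ \<zeta>(1) h1] by simp
  next
    case 2
    hence "2 * c2 \<noteq> M" using c1 unfolding b1_def b2_def by auto
    thus ?thesis using 2 q_lead_nonzero[OF c2 _ \<zeta>(2) h2] by simp
  next
    case 3
    thus ?thesis using q_lead_neq[OF c1 c2 _ \<zeta> h1 h2 hp hm] unfolding b1_def b2_def by simp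
  qed
qed

definition unit_root :: "int \<Rightarrow> int \<Rightarrow> complex" where
  "unit_root N k = exp (2 * of_real pi * \<i> * of_int k / of_int N)"

lemma unit_root_add: "unit_root N k * unit_root N l = unit_root N (k + l)"
  unfolding unit_root_def by (simp add: exp_add[symmetric] add_divide_distrib distrib_left)

lemma norm_unit_root [simp]: "norm (unit_root N k) = 1"
  unfolding unit_root_def by (simp add: norm_exp_eq_Re)

lemma unit_root_nonzero [simp]: "unit_root N k \<noteq> 0"
  unfolding unit_root_def by simp

lemma unit_root_eq_1_imp_dvd:
  assumes "N > 0" and "unit_root N k = 1"
  shows "N dvd k"
proof -
  have "2 * of_real pi * \<i> * of_int k / of_int N = \<i> * of_real (2 * pi * of_int k / of_int N)"
    by simp
  then obtain n :: int where "2 * pi * of_int k / of_int N = of_int (2 * n) * pi"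
    using assms(2) unfolding unit_root_def exp_eq_1 by auto
  hence "real_of_int k = real_of_int (n * N)" using assms(1) by (simp add: field_simps)
  thus ?thesis by (simp only: of_int_eq_iff) simp
qed

lemma unit_root_ne_1:
  fixes N D M r' s A :: int
  assumes "N > 0" "N = D * M" and cop: "coprime r' M" "coprime s D"
    and "\<not> [A = 0] (mod N)" and "M dvd A * r'"
  shows "unit_root N (A * s) \<noteq> 1"
proof
  assume "unit_root N (A * s) = 1"
  hence "N dvd A * s" using unit_root_eq_1_imp_dvd \<open>N > 0\<close> by blast
  have "M dvd A" using \<open>M dvd A * r'\<close> cop(1) by (simp add: coprime_commute coprime_dvd_mult_left_iff)
  then obtain k where k: "A = M * k" by blast
  have "M \<noteq> 0" using assms(1,2) by auto
  hence "D dvd k * s" using \<open>N dvd A * s\<close> assms(2) k by (simp add: mult.assoc mult.commute[of D M])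
  hence "D dvd k" using cop(2) by (simp add: coprime_commute coprime_dvd_mult_left_iff)
  hence "N dvd A" using assms(2) k by (simp add: mult.commute[of D M] mult_dvd_mono)
  thus False using \<open>\<not> [A = 0] (mod N)\<close> by (simp add: cong_0_iff)
qed

lemma q_lead_cusp_pair_nonzero:
  fixes N D M r' s a1 a2 :: int
  assumes N: "N > 0" "N = D * M" "M > 0" and cop: "coprime r' M" "coprime s D"
    and a: "\<not> [a1 = 0] (mod N)" "\<not> [a2 = 0] (mod N)" "\<not> [a1 = a2] (mod N)" "\<not> [a1 = - a2] (mod N)"
  shows "(if mod_dist M (a1 * r') \<le> mod_dist M (a2 * r') then q_lead (unit_root N (a1 * s)) ((a1 * r') mod M) M else 0)
       - (if mod_dist M (a2 * r') \<le> mod_dist M (a1 * r') then q_lead (unit_root N (a2 * s)) ((a2 * r') mod M) M else 0)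
       \<noteq> 0"
  unfolding mod_dist_def
proof (rule q_lead_pair_nonzero)
  have root_ne_1: "unit_root N (A * s) \<noteq> 1" if "\<not> [A = 0] (mod N)" "M dvd A * r'" for A
    using unit_root_ne_1[OF N(1,2) cop that] .
  show "unit_root N (a1 * s) \<noteq> 1" if "(a1 * r') mod M = 0"
    using root_ne_1[OF a(1)] that by (simp add: dvd_eq_mod_eq_0)
  show "unit_root N (a2 * s) \<noteq> 1" if "(a2 * r') mod M = 0"
    using root_ne_1[OF a(2)] that by (simp add: dvd_eq_mod_eq_0)
  show "unit_root N (a1 * s) \<noteq> unit_root N (a2 * s)" if "(a1 * r') mod M = (a2 * r') mod M"
  proof -
    have "M dvd (a1 - a2) * r'" using that by (simp add: mod_eq_dvd_iff left_diff_distrib)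
    moreover have "\<not> [a1 - a2 = 0] (mod N)" using a(3) by (simp add: cong_iff_dvd_diff)
    ultimately have "unit_root N ((a1 - a2) * s) \<noteq> 1" by (rule root_ne_1[rotated])
    moreover have "unit_root N (a1 * s) = unit_root N (a2 * s) * unit_root N ((a1 - a2) * s)"
      by (simp add: unit_root_add algebra_simps)
    ultimately show ?thesis by auto
  qed
  show "unit_root N (a1 * s) * unit_root N (a2 * s) \<noteq> 1"
    if "(a1 * r') mod M + (a2 * r') mod M = 0 \<or> (a1 * r') mod M + (a2 * r') mod M = M"
  proof -
    have "(a1 * r' + a2 * r') mod M = ((a1 * r') mod M + (a2 * r') mod M) mod M" by (simp add: mod_add_eq)
    hence "M dvd (a1 + a2) * r'" using that N(3) by (auto simp: distrib_right dvd_eq_mod_eq_0)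
    moreover have "\<not> [a1 + a2 = 0] (mod N)" using a(4) by (simp add: cong_iff_dvd_diff)
    ultimately have "unit_root N ((a1 + a2) * s) \<noteq> 1" by (rule root_ne_1[rotated])
    thus ?thesis by (simp add: unit_root_add distrib_right)
  qed
qed (use N(3) in simp_all)

section \<open>The order of W at a cusp\<close>

definition q_param :: "real \<Rightarrow> complex \<Rightarrow> complex" where
  "q_param h \<tau> = exp (2 * of_real pi * \<i> * \<tau> / of_real h)"

lemma q_param_nonzero [simp]: "q_param h \<tau> \<noteq> 0"
  by (simp add: q_param_def)

lemma norm_q_param: "norm (q_param h \<tau>) = exp (- 2 * pi * Im \<tau> / h)"
  by (simp add: q_param_def norm_exp_eq_Re)

lemma has_q_order_quotient:
  fixes f G1 G2 :: "complex \<Rightarrow> complex" and h R :: real and m1 m2 :: nat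
  assumes "h > 0" "R > 0" and G1: "G1 holomorphic_on ball 0 R" "G1 0 \<noteq> 0"
    and G2: "G2 holomorphic_on ball 0 R" "G2 0 \<noteq> 0"
    and f: "\<And>\<tau>. Im \<tau> > 0 \<Longrightarrow> norm (q_param h \<tau>) < R \<Longrightarrow>
      f \<tau> = q_param h \<tau> ^ m1 * G1 (q_param h \<tau>) / (q_param h \<tau> ^ m2 * G2 (q_param h \<tau>))"
  shows "has_q_order f h (int m1 - int m2)"
proof -
  have "continuous_on (ball 0 R) G2" using G2(1) by (rule holomorphic_on_imp_continuous_on)
  hence "isCont G2 0" using \<open>R > 0\<close> by (simp add: continuous_on_eq_continuous_at)
  then obtain \<epsilon> where "\<epsilon> > 0" and \<epsilon>: "\<And>Q. dist 0 Q < \<epsilon> \<Longrightarrow> G2 Q \<noteq> 0"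
    using continuous_at_avoid[of 0 G2 0] G2(2) by blast
  define r where "r = min \<epsilon> R"
  have r: "r > 0" "r \<le> R" using \<open>\<epsilon> > 0\<close> \<open>R > 0\<close> by (simp_all add: r_def)
  have G2r: "G2 Q \<noteq> 0" if "Q \<in> ball 0 r" for Q using \<epsilon> that by (simp add: r_def)
  define y0 where "y0 = max 0 (- h * ln r / (2 * pi))"
  have small: "norm (q_param h \<tau>) < r" if "Im \<tau> > y0" for \<tau>
  proof -
    have "- h * ln r / (2 * pi) < Im \<tau>" using that by (simp add: y0_def)
    hence "- 2 * pi * Im \<tau> / h < ln r" using \<open>h > 0\<close> by (simp add: field_simps)
    hence "exp (- 2 * pi * Im \<tau> / h) < exp (ln r)" by simp
    thus ?thesis using r by (simp add: norm_q_param)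
  qed
  have "ball 0 r \<subseteq> ball (0 :: complex) R" using r(2) by auto
  hence "G1 holomorphic_on ball 0 r" "G2 holomorphic_on ball 0 r"
    using G1(1) G2(1) by (auto intro: holomorphic_on_subset)
  hence "(\<lambda>Q. G1 Q / G2 Q) holomorphic_on ball 0 r"
    using G2r by (intro holomorphic_on_divide) auto
  moreover have "\<forall>\<tau>. Im \<tau> > y0 \<longrightarrow> q_param h \<tau> \<in> ball 0 r \<and>
      f \<tau> = q_param h \<tau> powi (int m1 - int m2) * (G1 (q_param h \<tau>) / G2 (q_param h \<tau>))"
  proof (intro allI impI conjI)
    fix \<tau> assume "Im \<tau> > y0"
    thus "q_param h \<tau> \<in> ball 0 r" using small by simp
    have "Im \<tau> > 0" using \<open>Im \<tau> > y0\<close> by (simp add: y0_def)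
    thus "f \<tau> = q_param h \<tau> powi (int m1 - int m2) * (G1 (q_param h \<tau>) / G2 (q_param h \<tau>))"
      using f[of \<tau>] small[OF \<open>Im \<tau> > y0\<close>] r by (simp add: power_int_diff power_int_of_nat)
  qed
  ultimately show ?thesis
    unfolding has_q_order_def Let_def q_param_def[symmetric] using r(1) G1(2) G2(2)
    by (intro exI[of _ r] exI[of _ "\<lambda>Q. G1 Q / G2 Q"] exI[of _ y0] conjI) auto
qed

lemma exp_row_argument_factor:
  fixes N D M r' r s a n :: int and \<tau> :: complex
  assumes "D > 0" "M > 0" "N = D * M" "r = D * r'"
  shows "exp (2 * of_real pi * \<i> * (of_int a / of_int N * (of_int r * \<tau> + of_int s) - of_int n * \<tau>))
       = unit_root N (a * s) * q_param (of_int M) \<tau> powi (a * r' - n * M)"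
proof -
  have "unit_root N (a * s) * q_param (of_int M) \<tau> powi (a * r' - n * M)
      = exp (2 * of_real pi * \<i> * of_int (a * s) / of_int N
             + of_int (a * r' - n * M) * (2 * of_real pi * \<i> * \<tau> / of_int M))"
    unfolding unit_root_def q_param_def exp_power_int exp_add by simp
  also have "2 * of_real pi * \<i> * of_int (a * s) / of_int N
      + of_int (a * r' - n * M) * (2 * of_real pi * \<i> * \<tau> / of_int M)
      = 2 * of_real pi * \<i> * (of_int a / of_int N * (of_int r * \<tau> + of_int s) - of_int n * \<tau>)"
  proof -
    have "(of_int D :: complex) \<noteq> 0" "(of_int M :: complex) \<noteq> 0" using assms by auto
    thus ?thesis unfolding assms(3,4) by (simp add: field_simps)
  qed
  finally show ?thesis by simp
qed

lemma wp_diff_moebius_q_expansion: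
  fixes N D M r r' s a1 a2 :: int
  assumes N: "N > 0" "N = D * M" "D > 0" "M > 0" and r: "r = D * r'"
    and cop: "coprime r' M" "coprime s D"
    and a: "\<not> [a1 = 0] (mod N)" "\<not> [a2 = 0] (mod N)" "\<not> [a1 = a2] (mod N)" "\<not> [a1 = - a2] (mod N)"
  obtains G where "G holomorphic_on ball 0 (1/2)" and "G 0 \<noteq> 0"
    and "\<And>\<tau>. Im \<tau> > 0 \<Longrightarrow> norm (q_param (of_int M) \<tau>) < 1/2 \<Longrightarrow>
      wp (of_int a1 / of_int N * (of_int r * \<tau> + of_int s)) \<tau> - wp (of_int a2 / of_int N * (of_int r * \<tau> + of_int s)) \<tau>
      = (2 * of_real pi * \<i>)\<^sup>2 * (q_param (of_int M) \<tau> ^ min (nat (mod_dist M (a1 * r'))) (nat (mod_dist M (a2 * r')))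
          * G (q_param (of_int M) \<tau>))"
proof -
  define \<zeta>1 \<zeta>2 where "\<zeta>1 = unit_root N (a1 * s)" and "\<zeta>2 = unit_root N (a2 * s)"
  define b1 b2 where "b1 = nat (mod_dist M (a1 * r'))" and "b2 = nat (mod_dist M (a2 * r'))"
  have \<zeta>: "norm \<zeta>1 = 1" "norm \<zeta>2 = 1" by (simp_all add: \<zeta>1_def \<zeta>2_def)
  obtain g1 where g1: "g1 holomorphic_on ball 0 (1/2)" "g1 0 = q_lead \<zeta>1 ((a1 * r') mod M) M"
    "\<And>Q. Q \<noteq> 0 \<Longrightarrow> norm Q < 1/2 \<Longrightarrow>
      ((\<lambda>n. row_kernel (\<zeta>1 * Q powi (a1 * r' - n * M))) has_sum Q ^ b1 * g1 Q) UNIV"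
    using row_kernel_int_series_q_expansion[OF \<zeta>(1) N(4), where A = "a1 * r'"] unfolding b1_def by blast
  obtain g2 where g2: "g2 holomorphic_on ball 0 (1/2)" "g2 0 = q_lead \<zeta>2 ((a2 * r') mod M) M"
    "\<And>Q. Q \<noteq> 0 \<Longrightarrow> norm Q < 1/2 \<Longrightarrow>
      ((\<lambda>n. row_kernel (\<zeta>2 * Q powi (a2 * r' - n * M))) has_sum Q ^ b2 * g2 Q) UNIV"
    using row_kernel_int_series_q_expansion[OF \<zeta>(2) N(4), where A = "a2 * r'"] unfolding b2_def by blast
  obtain G where G: "G holomorphic_on ball 0 (1/2)"
    "G 0 = (if b1 \<le> b2 then g1 0 else 0) - (if b2 \<le> b1 then g2 0 else 0)"
    "\<And>Q. Q ^ b1 * g1 Q - Q ^ b2 * g2 Q = Q ^ min b1 b2 * G Q"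
    using holomorphic_lowest_power_factor[OF g1(1) g2(1)] by blast
  show ?thesis
  proof
    show "G holomorphic_on ball 0 (1/2)" by (fact G(1))
    have "b1 \<le> b2 \<longleftrightarrow> mod_dist M (a1 * r') \<le> mod_dist M (a2 * r')"
      and "b2 \<le> b1 \<longleftrightarrow> mod_dist M (a2 * r') \<le> mod_dist M (a1 * r')"
      using mod_dist_nonneg[OF N(4)] by (simp_all add: b1_def b2_def nat_le_eq_zle)
    thus "G 0 \<noteq> 0"
      using q_lead_cusp_pair_nonzero[OF N(1,2,4) cop a] unfolding G(2) g1(2) g2(2) \<zeta>1_def \<zeta>2_def by simp
  next
    fix \<tau> :: complex
    assume \<tau>: "Im \<tau> > 0" "norm (q_param (of_int M) \<tau>) < 1/2"
    define Q where "Q = q_param (of_int M) \<tau>"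
    have Q: "Q \<noteq> 0" "norm Q < 1/2" using \<tau>(2) by (simp_all add: Q_def)
    have e: "exp (2 * of_real pi * \<i> * (of_int a / of_int N * (of_int r * \<tau> + of_int s) - of_int n * \<tau>))
        = unit_root N (a * s) * Q powi (a * r' - n * M)" for a n
      unfolding Q_def by (rule exp_row_argument_factor[OF N(3,4,2) r])
    have "M dvd a1 * r' \<Longrightarrow> \<zeta>1 \<noteq> 1" "M dvd a2 * r' \<Longrightarrow> \<zeta>2 \<noteq> 1"
      unfolding \<zeta>1_def \<zeta>2_def using unit_root_ne_1[OF N(1,2) cop] a(1,2) by blast+
    hence "wp (of_int a1 / of_int N * (of_int r * \<tau> + of_int s)) \<tau> - wp (of_int a2 / of_int N * (of_int r * \<tau> + of_int s)) \<tau>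
        = (2 * of_real pi * \<i>)\<^sup>2 * (Q ^ b1 * g1 Q - Q ^ b2 * g2 Q)"
      by (intro wp_diff_eq_row_sums[OF \<tau>(1) Q(1) _ \<zeta> e[of a1, folded \<zeta>1_def] e[of a2, folded \<zeta>2_def]
            _ _ g1(3)[OF Q] g2(3)[OF Q]]) (use Q in auto)
    also have "\<dots> = (2 * of_real pi * \<i>)\<^sup>2 * (Q ^ min b1 b2 * G Q)" by (simp only: G(3))
    finally show "wp (of_int a1 / of_int N * (of_int r * \<tau> + of_int s)) \<tau> - wp (of_int a2 / of_int N * (of_int r * \<tau> + of_int s)) \<tau>
        = (2 * of_real pi * \<i>)\<^sup>2 * (q_param (of_int M) \<tau> ^ min (nat (mod_dist M (a1 * r'))) (nat (mod_dist M (a2 * r')))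
          * G (q_param (of_int M) \<tau>))"
      by (simp only: Q_def b1_def b2_def)
  qed
qed

lemma has_q_order_W_moebius:
  fixes N D M p q r r' s a1 a2 a3 a4 :: int
  assumes N: "N > 0" "N = D * M" "D > 0" "M > 0" and r: "r = D * r'" "coprime r' M" "coprime s D"
    and det: "p * s - q * r = 1"
    and a12: "\<not> [a1 = 0] (mod N)" "\<not> [a2 = 0] (mod N)" "\<not> [a1 = a2] (mod N)" "\<not> [a1 = - a2] (mod N)"
    and a34: "\<not> [a3 = 0] (mod N)" "\<not> [a4 = 0] (mod N)" "\<not> [a3 = a4] (mod N)" "\<not> [a3 = - a4] (mod N)"
  shows "has_q_order (\<lambda>\<tau>. W N a1 a2 a3 a4 (moebius p q r s \<tau>)) (of_int M)
    (min (mod_dist M (a1 * r')) (mod_dist M (a2 * r')) - min (mod_dist M (a3 * r')) (mod_dist M (a4 * r')))"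
proof -
  define e where "e a b = min (nat (mod_dist M (a * r'))) (nat (mod_dist M (b * r')))" for a b
  obtain G12 where G12: "G12 holomorphic_on ball 0 (1/2)" "G12 0 \<noteq> 0" and E12:
    "\<And>\<tau>. Im \<tau> > 0 \<Longrightarrow> norm (q_param (of_int M) \<tau>) < 1/2 \<Longrightarrow>
      wp (of_int a1 / of_int N * (of_int r * \<tau> + of_int s)) \<tau> - wp (of_int a2 / of_int N * (of_int r * \<tau> + of_int s)) \<tau>
      = (2 * of_real pi * \<i>)\<^sup>2 * (q_param (of_int M) \<tau> ^ e a1 a2 * G12 (q_param (of_int M) \<tau>))"
    unfolding e_def using wp_diff_moebius_q_expansion[OF N r a12] by blast
  obtain G34 where G34: "G34 holomorphic_on ball 0 (1/2)" "G34 0 \<noteq> 0" and E34: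
    "\<And>\<tau>. Im \<tau> > 0 \<Longrightarrow> norm (q_param (of_int M) \<tau>) < 1/2 \<Longrightarrow>
      wp (of_int a3 / of_int N * (of_int r * \<tau> + of_int s)) \<tau> - wp (of_int a4 / of_int N * (of_int r * \<tau> + of_int s)) \<tau>
      = (2 * of_real pi * \<i>)\<^sup>2 * (q_param (of_int M) \<tau> ^ e a3 a4 * G34 (q_param (of_int M) \<tau>))"
    unfolding e_def using wp_diff_moebius_q_expansion[OF N r a34] by blast
  have "has_q_order (\<lambda>\<tau>. W N a1 a2 a3 a4 (moebius p q r s \<tau>)) (of_int M) (int (e a1 a2) - int (e a3 a4))"
  proof (rule has_q_order_quotient[of _ "1/2" G12 G34])
    fix \<tau> assume \<tau>: "Im \<tau> > 0" "norm (q_param (of_int M) \<tau>) < 1/2"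
    show "W N a1 a2 a3 a4 (moebius p q r s \<tau>) =
        q_param (of_int M) \<tau> ^ e a1 a2 * G12 (q_param (of_int M) \<tau>) /
        (q_param (of_int M) \<tau> ^ e a3 a4 * G34 (q_param (of_int M) \<tau>))"
      unfolding W_moebius[OF det \<tau>(1)] E12[OF \<tau>] E34[OF \<tau>] by simp
  qed (use \<open>M > 0\<close> G12 G34 in simp_all)
  thus ?thesis using mod_dist_nonneg[OF \<open>M > 0\<close>] by (simp add: e_def of_nat_min)
qed

lemma cusp_bottom_row:
  fixes N t p q r s :: int
  assumes N: "N > 0" and rt: "[r = t] (mod N)" and det: "p * s - q * r = 1"
  defines "D \<equiv> gcd t N"
  shows "r = D * (r div D)" "coprime (r div D) (N div D)" "coprime s D"
    "[r div D = t div D] (mod (N div D))"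
proof -
  obtain k where k: "r = t + N * k" using rt by (metis cong_iff_lin cong_sym)
  have "D dvd N" "D dvd t" by (simp_all add: D_def)
  hence "D dvd r" using k by simp
  thus r: "r = D * (r div D)" by simp
  have "gcd N r = gcd N (k * N + t)" using k by (simp add: algebra_simps)
  also have "\<dots> = gcd N t" by (rule gcd_add_mult)
  finally have "gcd r N = D" by (simp add: D_def gcd.commute)
  thus "coprime (r div D) (N div D)" using div_gcd_coprime[of r N] N by simp
  show "coprime s D"
  proof (rule coprimeI)
    fix c assume "c dvd s" "c dvd D"
    hence "c dvd p * s - q * r" using \<open>D dvd r\<close> by (simp add: dvd_trans[of c D r])
    thus "is_unit c" using det by simp
  qed
  have "D > 0" using N by (simp add: D_def)
  have "D * (r div D) = D * (t div D + (N div D) * k)"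
    using k r \<open>D dvd N\<close> \<open>D dvd t\<close> by (simp add: distrib_left mult.assoc[symmetric])
  hence "r div D = t div D + (N div D) * k" using \<open>D > 0\<close> by simp
  thus "[r div D = t div D] (mod (N div D))" by (metis cong_iff_lin cong_sym)
qed

lemma brace_eq_mod_dist:
  fixes N D n :: int
  assumes "N div D > 0"
  shows "brace N D n = mod_dist (N div D) n"
proof -
  define M c where "M = N div D" and "c = n mod M"
  have M: "M > 0" and c: "0 \<le> c" "c < M" using assms by (simp_all add: M_def c_def)
  define P where "P x \<longleftrightarrow> 0 \<le> x \<and> 2 * x \<le> M \<and>
     (\<exists>\<mu> \<in> {1::int, -1}. [n = \<mu> * x] (mod M) \<and> ((x = 0 \<or> 2 * x = M) \<longrightarrow> \<mu> = 1))" for x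
  have neg: "(- x) mod M = M - x" if "0 < x" "x < M" for x
    using that by (simp add: zmod_zminus1_eq_if mod_pos_pos_trivial)
  have "P (min c (M - c))"
  proof (cases "c \<le> M - c")
    case True
    thus ?thesis unfolding P_def using c by (auto simp: cong_def c_def)
  next
    case False
    hence "[n = (-1) * (M - c)] (mod M)" using neg[of "M - c"] c by (simp add: cong_def c_def)
    thus ?thesis unfolding P_def using False c by auto
  qed
  moreover have "x = min c (M - c)" if "P x" for x
  proof -
    from that obtain \<mu> where x: "0 \<le> x" "2 * x \<le> M" and \<mu>: "\<mu> \<in> {1, -1}"
      and cg: "[n = \<mu> * x] (mod M)" and side: "(x = 0 \<or> 2 * x = M) \<longrightarrow> \<mu> = 1"
      unfolding P_def by blast
    show ?thesis
    proof (cases "\<mu> = 1")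
      case True
      hence "c = x" using cg x M by (simp add: cong_def c_def mod_pos_pos_trivial)
      thus ?thesis using x by simp
    next
      case False
      hence "\<mu> = -1" "0 < x" "2 * x < M" using \<mu> side x by auto
      hence "c = M - x" using cg neg[of x] by (simp add: cong_def c_def)
      thus ?thesis using \<open>2 * x < M\<close> by simp
    qed
  qed
  ultimately have "(THE x. P x) = min c (M - c)" by (rule the_equality)
  thus ?thesis unfolding brace_def P_def M_def c_def mod_dist_def by simp
qed

theorem proposition2:
  fixes N a1 a2 a3 a4 u t :: int
  assumes "N > 0"
    and "\<not> [a1 = 0] (mod N)" "\<not> [a2 = 0] (mod N)"
    and "\<not> [a3 = 0] (mod N)" "\<not> [a4 = 0] (mod N)"
    and "\<not> [a1 = a2] (mod N)" "\<not> [a1 = - a2] (mod N)"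
    and "\<not> [a3 = a4] (mod N)" "\<not> [a3 = - a4] (mod N)"
    and "(1 \<le> t \<and> 2 * t < N \<and> 1 \<le> u \<and> u \<le> gcd t N \<and> gcd u (gcd t N) = 1) \<or>
         ((2 * t = N \<or> t = N) \<and> 1 \<le> u \<and> 2 * u \<le> gcd t N \<and> gcd u (gcd t N) = 1)"
  shows "\<forall>p q r s. p * s - q * r = 1 \<longrightarrow> [r = t] (mod N) \<longrightarrow> [p = u] (mod (gcd t N)) \<longrightarrow>
           has_q_order (\<lambda>\<tau>. W N a1 a2 a3 a4 (moebius p q r s \<tau>))
             (real_of_int N / real_of_int (gcd t N))
             (min (brace N (gcd t N) (a1 * (t div gcd t N))) (brace N (gcd t N) (a2 * (t div gcd t N)))
              - min (brace N (gcd t N) (a3 * (t div gcd t N))) (brace N (gcd t N) (a4 * (t div gcd t N))))"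
proof (intro allI impI)
  fix p q r s :: int
  assume det: "p * s - q * r = 1" and rt: "[r = t] (mod N)" and "[p = u] (mod (gcd t N))"
  define D M r' where "D = gcd t N" and "M = N div D" and "r' = r div D"
  have D: "N = D * M" "D > 0" "M > 0"
    using \<open>N > 0\<close> zdvd_imp_le[of D N] by (auto simp: D_def M_def pos_imp_zdiv_pos_iff)
  have r: "r = D * r'" "coprime r' M" "coprime s D" "[r' = t div D] (mod M)"
    using cusp_bottom_row[OF \<open>N > 0\<close> rt det] by (simp_all add: D_def M_def r'_def)
  have "has_q_order (\<lambda>\<tau>. W N a1 a2 a3 a4 (moebius p q r s \<tau>)) (of_int M)
    (min (mod_dist M (a1 * r')) (mod_dist M (a2 * r')) - min (mod_dist M (a3 * r')) (mod_dist M (a4 * r')))"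
    by (rule has_q_order_W_moebius[OF \<open>N > 0\<close> D r(1-3) det assms(2,3,6,7,4,5,8,9)])
  moreover have "brace N D (a * (t div D)) = mod_dist M (a * r')" for a
    using brace_eq_mod_dist[of N D] mod_dist_cong[OF cong_scalar_left[OF r(4)]] \<open>M > 0\<close>
    by (simp add: M_def)
  moreover have "real_of_int N / real_of_int D = real_of_int M" using D by simp
  ultimately show "has_q_order (\<lambda>\<tau>. W N a1 a2 a3 a4 (moebius p q r s \<tau>))
             (real_of_int N / real_of_int (gcd t N))
             (min (brace N (gcd t N) (a1 * (t div gcd t N))) (brace N (gcd t N) (a2 * (t div gcd t N)))
              - min (brace N (gcd t N) (a3 * (t div gcd t N))) (brace N (gcd t N) (a4 * (t div gcd t N))))"
    unfolding D_def[symmetric] by simp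
qed

end
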